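(* For $0 < s < 2$ define $T^{-1}(s) = \sqrt{1 - \frac{1}{4}s^2} - s$. Let $s_1^* = \sqrt{\frac{1}{3}(2+\sqrt{2})}$ and define \[\sigma = \sigma(s_1) = \begin{cases} \frac{1}{4}\left(-s_1 - 2T^{-1}(s_1) + \sqrt{8 - (s_1 - 2T^{-1}(s_1))^2}\right), & \text{if } s_1 \leq s_1^*,\\ \frac{1}{5}\left(\sqrt{20 - s_1^2} - 2s_1\right), & \text{otherwise.} \end{cases}\] Let $\ell_1 = \sqrt{1 - T^{-1}(s_1)^2} - \frac{s_1}{2}$. Define $x_{+1} = \frac{s_1}{2} + \frac{\sigma}{2\sqrt{2}}$, $x_{+2} = \frac{s_1}{2} + 0.645\sigma$, \[ y_{+1} = \begin{cases} T^{-1}(s_1) + \sigma + \frac{\sigma}{2\sqrt{2}}, &\text{if } s_1 \leq s_1^*,\\ \frac{\sigma}{2} + \frac{\sigma}{2\sqrt{2}}, &\text{otherwise,} \end{cases}\qquad y_{+2} = \begin{cases} T^{-1}(s_1) + 2 \cdot 0.645\sigma, &\text{if } s_1 \leq s_1^*,\\ -\frac{\sigma}{2} + 2 \cdot 0.645\sigma, &\text{otherwise,} \end{cases}\] and $F_{TP_1}(s_1) = x_{+1}^2 + y_{+1}^2$, $F_{TP_2}(s_1) = x_{+2}^2 + y_{+2}^2$. Then for all $s_1$ with $0.295 \leq s_1 \leq \sqrt{8/5}$ and $\ell_1 \leq s_1$, we have (1) $F_{TP_1}(s_1) \leq 1$ and (2) $F_{TP_2}(s_1) \leq 1$.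
   Context: Geometric meaning (not needed for the statement): $T^{-1}(s)$ is the highest possible $y$-coordinate of the bottom side of an axis-parallel square of side $s$ inside the unit disk centered at the origin; $\sigma(s_1)$ is the side length of the largest square fitting into the region of the disk to the left of such a topmost square of side $s_1$ and above the line through its bottom side; $\ell_1$ is the length of the bottom boundary of that region. *)

theory Defs
  imports Complex_Main
begin

definition Tinv :: "real \<Rightarrow> real" where
  "Tinv s = sqrt (1 - (1/4) * s^2) - s"

definition s1_star :: real where
  "s1_star = sqrt ((1/3) * (2 + sqrt 2))"

definition sigma :: "real \<Rightarrow> real" where
  "sigma s1 = (if s1 \<le> s1_star
     then (1/4) * (- s1 - 2 * Tinv s1 + sqrt (8 - (s1 - 2 * Tinv s1)^2))
     else (1/5) * (sqrt (20 - s1^2) - 2 * s1))"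

definition ell1 :: "real \<Rightarrow> real" where
  "ell1 s1 = sqrt (1 - (Tinv s1)^2) - s1 / 2"

definition xp1 :: "real \<Rightarrow> real" where
  "xp1 s1 = s1 / 2 + sigma s1 / (2 * sqrt 2)"

definition xp2 :: "real \<Rightarrow> real" where
  "xp2 s1 = s1 / 2 + 0.645 * sigma s1"

definition yp1 :: "real \<Rightarrow> real" where
  "yp1 s1 = (if s1 \<le> s1_star
     then Tinv s1 + sigma s1 + sigma s1 / (2 * sqrt 2)
     else sigma s1 / 2 + sigma s1 / (2 * sqrt 2))"

definition yp2 :: "real \<Rightarrow> real" where
  "yp2 s1 = (if s1 \<le> s1_star
     then Tinv s1 + 2 * 0.645 * sigma s1
     else - sigma s1 / 2 + 2 * 0.645 * sigma s1)"

definition F_TP1 :: "real \<Rightarrow> real" where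
  "F_TP1 s1 = (xp1 s1)^2 + (yp1 s1)^2"

definition F_TP2 :: "real \<Rightarrow> real" where
  "F_TP2 s1 = (xp2 s1)^2 + (yp2 s1)^2"

end

theory Submission
  imports Defs
begin

(* With u = sqrt (1 - s1^2/4) one has 1 - Tinv(s1)^2 = s1 (2u - 3 s1/4), so ell1 s1 <= s1
   forces 2u <= 3 s1, i.e. s1^2 >= 2/5.  Beyond s1_star crude bounds on sigma suffice.
   On [sqrt (2/5), s1_star] the bound for F_TP2 is tight (about 0.996 at the left end),
   so this range is cut into 18 intervals; on each of them rational enclosures of u and
   of sqrt (8 - (3 s1 - 2u)^2) enclose sigma, hence both coordinates of each point, and
   the resulting bound on x^2 + y^2 is checked in exact rational arithmetic. *)

lemma power2_le_max_power2:
  fixes x :: "'a::linordered_idom"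
  assumes "l \<le> x" "x \<le> h"
  shows "x\<^sup>2 \<le> max (l\<^sup>2) (h\<^sup>2)"
proof -
  have "\<bar>x\<bar> \<le> abs (max \<bar>l\<bar> \<bar>h\<bar>)"
    using assms by auto
  then have "x\<^sup>2 \<le> (max \<bar>l\<bar> \<bar>h\<bar>)\<^sup>2"
    by (simp only: abs_le_square_iff)
  also have "\<dots> = max (l\<^sup>2) (h\<^sup>2)"
    by (auto simp: max_def abs_le_square_iff)
  finally show ?thesis .
qed

lemma max_zero_power2_le:
  fixes x :: "'a::linordered_idom"
  assumes "l \<le> x"
  shows "(max l 0)\<^sup>2 \<le> x\<^sup>2"
  using assms by (cases "0 \<le> l") (auto intro: power_mono)

lemma atLeastAtMost_subset_UN_consecutive:
  fixes xs :: "'a::linorder list"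
  assumes "tl xs \<noteq> []"
  shows "{hd xs..last xs} \<subseteq> (\<Union>(a, b)\<in>set (zip xs (tl xs)). {a..b})"
  using assms
proof (induction xs)
  case Nil
  then show ?case by simp
next
  case (Cons x xs)
  show ?case
  proof (cases "tl xs = []")
    case True
    with Cons.prems show ?thesis
      by (cases xs) auto
  next
    case False
    have "{x..last (x # xs)} \<subseteq> {x..hd xs} \<union> {hd xs..last xs}"
      using Cons.prems by auto
    moreover have "zip (x # xs) xs = (x, hd xs) # zip xs (tl xs)"
      using Cons.prems by (cases xs) auto
    ultimately show ?thesis
      using Cons.IH[OF False] by auto
  qed
qed

lemma sqrt2_bounds: "1.41421 \<le> sqrt (2::real)" "sqrt (2::real) \<le> 1.41422"
  by (rule real_le_rsqrt real_le_lsqrt; simp add: power2_eq_square)+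

lemma inverse_two_sqrt2_bounds:
  "0.35355 \<le> 1 / (2 * sqrt (2::real))" "1 / (2 * sqrt (2::real)) \<le> 0.35356"
  using sqrt2_bounds by (simp_all add: field_simps)

lemma s1_star_bounds: "1.0668 \<le> s1_star" "s1_star \<le> 1.067"
  unfolding s1_star_def
  by (rule real_le_rsqrt real_le_lsqrt; use sqrt2_bounds in \<open>simp add: power2_eq_square\<close>)+

lemma ell1_le_imp_square_ge:
  fixes s :: real
  assumes "0 < s" "ell1 s \<le> s"
  shows "2/5 \<le> s\<^sup>2"
proof (rule ccontr)
  assume "\<not> 2/5 \<le> s\<^sup>2"
  define u where "u = sqrt (1 - 1/4 * s\<^sup>2)"
  have u_sq: "u\<^sup>2 = 1 - 1/4 * s\<^sup>2" and "0 \<le> u"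
    using \<open>\<not> 2/5 \<le> s\<^sup>2\<close> by (simp_all add: u_def)
  have "(3*s)\<^sup>2 < (2*u)\<^sup>2"
    using u_sq \<open>\<not> 2/5 \<le> s\<^sup>2\<close> by (simp add: power_mult_distrib)
  then have "3*s < 2*u"
    by (rule power2_less_imp_less) (use \<open>0 \<le> u\<close> in simp)
  have "1 - (Tinv s)\<^sup>2 = s * (2*u - 3/4 * s)"
    unfolding Tinv_def u_def[symmetric] using u_sq
    by (simp add: power2_diff power2_eq_square algebra_simps)
  also have "\<dots> > (3/2 * s)\<^sup>2"
    using \<open>3*s < 2*u\<close> \<open>0 < s\<close> by (simp add: power2_eq_square algebra_simps)
  finally have "3/2 * s < sqrt (1 - (Tinv s)\<^sup>2)"
    by (rule real_less_rsqrt)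
  with assms(2) show False
    by (simp add: ell1_def)
qed

(* lu, hu enclose u = sqrt (1 - s^2/4) and lw, hw enclose sqrt (8 - (3s - 2u)^2) for
   s in [a, b]; 0.35355 and 0.35356 bound 1 / (2 sqrt 2). *)
fun interval_certified :: "real \<Rightarrow> real \<Rightarrow> real \<times> real \<times> real \<times> real \<Rightarrow> bool" where
  "interval_certified a b (lu, hu, lw, hw) \<longleftrightarrow>
     0 \<le> a \<and> lu\<^sup>2 \<le> 1 - 1/4 * b\<^sup>2 \<and> 1 - 1/4 * a\<^sup>2 \<le> hu\<^sup>2 \<and> 0 \<le> hu \<and>
     lw\<^sup>2 \<le> 8 - max ((3*a - 2*hu)\<^sup>2) ((3*b - 2*lu)\<^sup>2) \<and>
     8 - (max (3*a - 2*hu) 0)\<^sup>2 \<le> hw\<^sup>2 \<and> 0 \<le> hw \<and>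
     (let \<sigma>l = (a - 2*hu + lw) / 4; \<sigma>h = (b - 2*lu + hw) / 4 in
       0 \<le> \<sigma>l \<and>
       max ((a/2 + 0.35355*\<sigma>l)\<^sup>2) ((b/2 + 0.35356*\<sigma>h)\<^sup>2)
         + max ((lu - b + 1.35355*\<sigma>l)\<^sup>2) ((hu - a + 1.35356*\<sigma>h)\<^sup>2) \<le> 1 \<and>
       max ((a/2 + 0.645*\<sigma>l)\<^sup>2) ((b/2 + 0.645*\<sigma>h)\<^sup>2)
         + max ((lu - b + 1.29*\<sigma>l)\<^sup>2) ((hu - a + 1.29*\<sigma>h)\<^sup>2) \<le> 1)"

lemma interval_certified_enclosure:
  assumes cert: "interval_certified a b (lu, hu, lw, hw)"
    and s: "a \<le> s" "s \<le> b" "s \<le> s1_star"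
  shows "lu - b \<le> Tinv s" "Tinv s \<le> hu - a"
    and "(a - 2*hu + lw) / 4 \<le> sigma s" "sigma s \<le> (b - 2*lu + hw) / 4"
proof -
  define u where "u = sqrt (1 - 1/4 * s\<^sup>2)"
  have "a\<^sup>2 \<le> s\<^sup>2" "s\<^sup>2 \<le> b\<^sup>2"
    using cert s by (auto intro: power_mono)
  then have u: "lu \<le> u" "u \<le> hu"
    using cert unfolding u_def by (auto intro!: real_le_rsqrt real_le_lsqrt)
  define d where "d = 3*s - 2*u"
  have "d\<^sup>2 \<le> max ((3*a - 2*hu)\<^sup>2) ((3*b - 2*lu)\<^sup>2)"
    unfolding d_def by (rule power2_le_max_power2) (use s u in linarith)+
  moreover have "(max (3*a - 2*hu) 0)\<^sup>2 \<le> d\<^sup>2"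
    unfolding d_def by (rule max_zero_power2_le) (use s u in linarith)
  ultimately have w: "lw \<le> sqrt (8 - d\<^sup>2)" "sqrt (8 - d\<^sup>2) \<le> hw"
    using cert by (auto intro!: real_le_rsqrt real_le_lsqrt)
  have "Tinv s = u - s"
    by (simp add: Tinv_def u_def)
  moreover have "sigma s = (s - 2*u + sqrt (8 - d\<^sup>2)) / 4"
    using s(3) by (simp add: sigma_def \<open>Tinv s = u - s\<close> d_def)
  ultimately show "lu - b \<le> Tinv s" "Tinv s \<le> hu - a"
    and "(a - 2*hu + lw) / 4 \<le> sigma s" "sigma s \<le> (b - 2*lu + hw) / 4"
    using s u w by (simp_all add: divide_right_mono)
qed

lemma interval_certified_imp_F_TP_le_one:
  assumes cert: "interval_certified a b c"
    and s: "a \<le> s" "s \<le> b" "s \<le> s1_star"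
  shows "F_TP1 s \<le> 1 \<and> F_TP2 s \<le> 1"
proof -
  obtain lu hu lw hw where c: "c = (lu, hu, lw, hw)"
    by (cases c) auto
  define \<sigma>l \<sigma>h where "\<sigma>l = (a - 2*hu + lw) / 4" and "\<sigma>h = (b - 2*lu + hw) / 4"
  define r where "r = 1 / (2 * sqrt (2::real))"
  have T: "lu - b \<le> Tinv s" "Tinv s \<le> hu - a" and \<sigma>: "\<sigma>l \<le> sigma s" "sigma s \<le> \<sigma>h"
    using interval_certified_enclosure[OF cert[unfolded c] s] by (simp_all add: \<sigma>l_def \<sigma>h_def)
  have cert': "0 \<le> \<sigma>l"
    "max ((a/2 + 0.35355*\<sigma>l)\<^sup>2) ((b/2 + 0.35356*\<sigma>h)\<^sup>2)
       + max ((lu - b + 1.35355*\<sigma>l)\<^sup>2) ((hu - a + 1.35356*\<sigma>h)\<^sup>2) \<le> 1"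
    "max ((a/2 + 0.645*\<sigma>l)\<^sup>2) ((b/2 + 0.645*\<sigma>h)\<^sup>2)
       + max ((lu - b + 1.29*\<sigma>l)\<^sup>2) ((hu - a + 1.29*\<sigma>h)\<^sup>2) \<le> 1"
    using cert unfolding c \<sigma>l_def \<sigma>h_def by (simp_all add: Let_def)
  have r: "0.35355 \<le> r" "r \<le> 0.35356"
    using inverse_two_sqrt2_bounds by (simp_all add: r_def)
  have r\<sigma>: "0.35355 * \<sigma>l \<le> r * sigma s" "r * sigma s \<le> 0.35356 * \<sigma>h"
    by (rule mult_mono; use r \<sigma> \<open>0 \<le> \<sigma>l\<close> in linarith)+
  have "F_TP1 s = (s/2 + r * sigma s)\<^sup>2 + (Tinv s + sigma s + r * sigma s)\<^sup>2"
    using s(3) by (simp add: F_TP1_def xp1_def yp1_def r_def)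
  also have "\<dots> \<le> max ((a/2 + 0.35355*\<sigma>l)\<^sup>2) ((b/2 + 0.35356*\<sigma>h)\<^sup>2)
       + max ((lu - b + 1.35355*\<sigma>l)\<^sup>2) ((hu - a + 1.35356*\<sigma>h)\<^sup>2)"
    by (rule add_mono; rule power2_le_max_power2) (use s T \<sigma> r\<sigma> in \<open>simp; linarith\<close>)+
  finally have "F_TP1 s \<le> 1"
    using cert' by linarith
  have "F_TP2 s = (s/2 + 0.645 * sigma s)\<^sup>2 + (Tinv s + 1.29 * sigma s)\<^sup>2"
    using s(3) by (simp add: F_TP2_def xp2_def yp2_def)
  also have "\<dots> \<le> max ((a/2 + 0.645*\<sigma>l)\<^sup>2) ((b/2 + 0.645*\<sigma>h)\<^sup>2)
       + max ((lu - b + 1.29*\<sigma>l)\<^sup>2) ((hu - a + 1.29*\<sigma>h)\<^sup>2)"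
    by (rule add_mono; rule power2_le_max_power2) (use s T \<sigma> in \<open>simp; linarith\<close>)+
  finally have "F_TP2 s \<le> 1"
    using cert' by linarith
  with \<open>F_TP1 s \<le> 1\<close> show ?thesis ..
qed

definition s1_subdivision :: "real list" where
  "s1_subdivision =
     [0.632, 0.634, 0.636, 0.639, 0.643, 0.648, 0.654, 0.661, 0.67, 0.682,
      0.697, 0.716, 0.74, 0.77, 0.808, 0.857, 0.919, 0.998, 1.067]"

definition s1_subdivision_sqrt_bounds :: "(real \<times> real \<times> real \<times> real) list" where
  "s1_subdivision_sqrt_bounds =
     [(0.9484, 0.9488, 2.8284, 2.8285),
      (0.948, 0.9485, 2.8284, 2.8285),
      (0.9475, 0.9481, 2.8283, 2.8285),
      (0.9469, 0.9476, 2.8282, 2.8284),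
      (0.946, 0.947, 2.8279, 2.8283),
      (0.945, 0.9461, 2.8275, 2.828),
      (0.9438, 0.9451, 2.8268, 2.8276),
      (0.9422, 0.9439, 2.8256, 2.8269),
      (0.94, 0.9423, 2.8235, 2.8257),
      (0.9373, 0.9401, 2.8201, 2.8236),
      (0.9337, 0.9374, 2.8144, 2.8202),
      (0.929, 0.9338, 2.8051, 2.8145),
      (0.9229, 0.9291, 2.79, 2.8052),
      (0.9147, 0.923, 2.7652, 2.7902),
      (0.9035, 0.9148, 2.7232, 2.7653),
      (0.8881, 0.9036, 2.6529, 2.7234),
      (0.8666, 0.8882, 2.5318, 2.6531),
      (0.8458, 0.8667, 2.392, 2.532)]"

lemma s1_subdivision_certified:
  "list_all2 (\<lambda>(a, b). interval_certified a b)
     (zip s1_subdivision (tl s1_subdivision)) s1_subdivision_sqrt_bounds"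
  by (simp add: s1_subdivision_def s1_subdivision_sqrt_bounds_def Let_def power_divide)

lemma F_TP_le_one_below_s1_star:
  assumes "0.632 \<le> s" "s \<le> s1_star"
  shows "F_TP1 s \<le> 1 \<and> F_TP2 s \<le> 1"
proof -
  let ?xs = s1_subdivision
  have "tl ?xs \<noteq> []" "s \<in> {hd ?xs..last ?xs}"
    using assms s1_star_bounds by (simp_all add: s1_subdivision_def)
  then have "s \<in> (\<Union>(a, b)\<in>set (zip ?xs (tl ?xs)). {a..b})"
    using atLeastAtMost_subset_UN_consecutive by blast
  then obtain a b where ab: "(a, b) \<in> set (zip ?xs (tl ?xs))" "a \<le> s" "s \<le> b"
    by auto
  have "length (zip ?xs (tl ?xs)) = length s1_subdivision_sqrt_bounds"
    using s1_subdivision_certified by (rule list_all2_lengthD)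
  then obtain c where "((a, b), c) \<in> set (zip (zip ?xs (tl ?xs)) s1_subdivision_sqrt_bounds)"
    using ab(1) by (rule in_set_impl_in_set_zip1)
  with s1_subdivision_certified have "interval_certified a b c"
    by (auto simp: list_all2_iff)
  then show ?thesis
    using ab(2,3) assms(2) by (rule interval_certified_imp_F_TP_le_one)
qed

lemma F_TP_le_one_above_s1_star:
  assumes "s1_star < s" "s \<le> 1.265"
  shows "F_TP1 s \<le> 1 \<and> F_TP2 s \<le> 1"
proof -
  have s: "1.0668 \<le> s"
    using assms(1) s1_star_bounds(1) by linarith
  have "s\<^sup>2 \<le> 1.265\<^sup>2" "1.0668\<^sup>2 \<le> s\<^sup>2"
    using s assms(2) by (auto intro: power_mono)
  then have "2*s \<le> sqrt (20 - s\<^sup>2)"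
    by (intro real_le_rsqrt) (simp add: power_mult_distrib power_divide)
  moreover have "sqrt (20 - s\<^sup>2) \<le> 4.35"
    by (rule real_le_lsqrt) (use \<open>1.0668\<^sup>2 \<le> s\<^sup>2\<close> in \<open>simp add: power_divide; linarith\<close>)+
  moreover have "sigma s = (sqrt (20 - s\<^sup>2) - 2*s) / 5"
    using assms(1) by (simp add: sigma_def)
  ultimately have \<sigma>: "0 \<le> sigma s" "sigma s \<le> 0.4433"
    using s by simp_all
  define r where "r = 1 / (2 * sqrt (2::real))"
  have r: "0 \<le> r" "r \<le> 0.35356"
    using inverse_two_sqrt2_bounds by (simp_all add: r_def)
  have r\<sigma>: "0 \<le> r * sigma s" "r * sigma s \<le> 0.35356 * 0.4433"
    using r \<sigma> by (simp, intro mult_mono) simp_all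
  have "F_TP1 s = (s/2 + r * sigma s)\<^sup>2 + (sigma s / 2 + r * sigma s)\<^sup>2"
    using assms(1) by (simp add: F_TP1_def xp1_def yp1_def r_def)
  also have "\<dots> \<le> (1.265/2 + 0.35356 * 0.4433)\<^sup>2 + (0.4433/2 + 0.35356 * 0.4433)\<^sup>2"
    by (rule add_mono; rule power_mono) (use s assms(2) \<sigma> r\<sigma> in \<open>simp; linarith\<close>)+
  finally have "F_TP1 s \<le> 1"
    by (simp add: power_divide)
  have "F_TP2 s = (s/2 + 0.645 * sigma s)\<^sup>2 + (0.79 * sigma s)\<^sup>2"
    using assms(1) by (simp add: F_TP2_def xp2_def yp2_def)
  also have "\<dots> \<le> (1.265/2 + 0.645 * 0.4433)\<^sup>2 + (0.79 * 0.4433)\<^sup>2"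
    by (rule add_mono; rule power_mono) (use s assms(2) \<sigma> in \<open>simp; linarith\<close>)+
  finally have "F_TP2 s \<le> 1"
    by (simp add: power_divide)
  with \<open>F_TP1 s \<le> 1\<close> show ?thesis ..
qed

theorem lemma6:
  fixes s1 :: real
  assumes "0.295 \<le> s1" and "s1 \<le> sqrt (8/5)" and "ell1 s1 \<le> s1"
  shows "F_TP1 s1 \<le> 1 \<and> F_TP2 s1 \<le> 1"
proof -
  have "2/5 \<le> s1\<^sup>2"
    using assms(1,3) by (intro ell1_le_imp_square_ge) auto
  have "0.632 \<le> s1"
    by (rule power2_le_imp_le) (use \<open>2/5 \<le> s1\<^sup>2\<close> assms(1) in \<open>simp add: power_divide; linarith\<close>)+
  have "sqrt (8/5) \<le> (1.265::real)"
    by (rule real_le_lsqrt) (simp_all add: power_divide)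
  then have "s1 \<le> 1.265"
    using assms(2) by linarith
  show ?thesis
  proof (cases "s1 \<le> s1_star")
    case True
    with \<open>0.632 \<le> s1\<close> show ?thesis
      by (rule F_TP_le_one_below_s1_star)
  next
    case False
    with \<open>s1 \<le> 1.265\<close> show ?thesis
      by (intro F_TP_le_one_above_s1_star) auto
  qed
qed

end
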